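(* Let $\mathbf n\in\mathbb{Z}_{\ge 0}^{I}$ be an observed contingency table with total $N=\langle \mathbf n,\mathbf 1\rangle\ge 1$, and let $\lambda>0$ and $\lambda_h>0$ for every nonempty $h\subseteq\mathcal K$. Define, for $\theta\in\mathbb{R}^{I-1}$, $$P_\Lambda(\theta)=\frac1N\,\ell(\theta)-\lambda\sum_{h\subseteq\mathcal K,\,h\neq\emptyset}\lambda_h\|\theta_h\|_2 .$$ Then the program $\max_{\theta\in\mathbb{R}^{I-1}}P_\Lambda(\theta)$ admits a unique optimizer $\widehat\theta\in\mathbb{R}^{I-1}$, and for every nonempty $h$ its block $\widehat\theta_h$ satisfies $$-\frac1N U_h^{\top}(\mathbf n-\widehat{\mathbf m})+\lambda\lambda_h\frac{\widehat\theta_h}{\|\widehat\theta_h\|_2}=\mathbf 0\quad\text{if }\widehat\theta_h\neq\mathbf 0,\qquad \frac1N\big\|U_h^{\top}(\mathbf n-\widehat{\mathbf m})\big\|_2\le\lambda\lambda_h\quad\text{if }\widehat\theta_h=\mathbf 0,$$ where $\widehat{\mathbf m}=\frac{N}{\langle \exp(U\widehat\theta),\mathbf 1\rangle}\exp(U\widehat\theta)$ (exponential taken coordinatewise).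
   Context: Let $K\ge 1$ categorical variables be given, variable $k\in\mathcal K=\{1,\dots,K\}$ taking values in $\{1,\dots,I_k\}$ with $I_k\ge 2$. The set of cells is $\mathcal I=\prod_{k}\{1,\dots,I_k\}$, of cardinality $I=\prod_k I_k$; $\mathbb{R}^{\mathcal I}$ is identified with $\mathbb{R}^I$ with the standard inner product, and $\mathbf 1$ is the all-ones vector. For $h\subseteq\mathcal K$ and a cell $i$, write $i_h=(i_k)_{k\in h}$. Let $\mathcal W_h=\{f\in\mathbb{R}^{\mathcal I}: f(i)=f(j)\text{ whenever }i_h=j_h\}$ and $\mathcal U_h=\mathcal W_h\cap\big(\sum_{h'\subsetneq h}\mathcal W_{h'}\big)^{\perp}$ ($\mathcal U_\emptyset$ is the span of $\mathbf 1$). These subspaces are mutually orthogonal, $\mathbb{R}^{\mathcal I}=\bigoplus_{h\subseteq\mathcal K}\mathcal U_h$, and $d_h=\dim\mathcal U_h=\prod_{k\in h}(I_k-1)$. For each nonempty $h$ fix an $I\times d_h$ matrix $U_h$ whose columns form a basis of $\mathcal U_h$, and let $U=[U_h]_{h\neq\emptyset}$ be the $I\times(I-1)$ matrix obtained by adjoining them. Each $\theta\in\mathbb{R}^{I-1}$ is partitioned accordingly into blocks $\theta_h\in\mathbb{R}^{d_h}$, $h\neq\emptyset$. The log-likelihood of the saturated multinomial log-linear model is $$\ell(\theta)=\langle U^{\top}\mathbf n,\theta\rangle-N\log\langle \exp(U\theta),\mathbf 1\rangle+\log N!-\sum_{i}\log \mathbf n_i!.$$ *)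

theory Defs
  imports Complex_Main "HOL-Library.FuncSet"
begin

type_synonym cell = "nat \<Rightarrow> nat"

definition cells :: "nat \<Rightarrow> (nat \<Rightarrow> nat) \<Rightarrow> cell set" where
  "cells K Is = PiE {..<K} (\<lambda>k. {..<Is k})"

definition nonempty_subsets :: "nat \<Rightarrow> nat set set" where
  "nonempty_subsets K = {h. h \<subseteq> {..<K} \<and> h \<noteq> {}}"

definition cinner :: "cell set \<Rightarrow> (cell \<Rightarrow> real) \<Rightarrow> (cell \<Rightarrow> real) \<Rightarrow> real" where
  "cinner C f g = (\<Sum>i\<in>C. f i * g i)"

definition W_space :: "cell set \<Rightarrow> nat set \<Rightarrow> (cell \<Rightarrow> real) set" where
  "W_space C h = {f. \<forall>i\<in>C. \<forall>j\<in>C. restrict i h = restrict j h \<longrightarrow> f i = f j}"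

text \<open>U_h = W_h intersected with the orthogonal complement of the sum of W_h' for h' strictly
  contained in h (orthogonal to the sum iff orthogonal to every summand).\<close>
definition U_space :: "cell set \<Rightarrow> nat set \<Rightarrow> (cell \<Rightarrow> real) set" where
  "U_space C h = W_space C h \<inter>
     {f. \<forall>h'. h' \<subset> h \<longrightarrow> (\<forall>g\<in>W_space C h'. cinner C f g = 0)}"

definition dimU :: "(nat \<Rightarrow> nat) \<Rightarrow> nat set \<Rightarrow> nat" where
  "dimU Is h = (\<Prod>k\<in>h. Is k - 1)"

definition is_basis_cols :: "cell set \<Rightarrow> (nat \<Rightarrow> cell \<Rightarrow> real) \<Rightarrow> nat \<Rightarrow> (cell \<Rightarrow> real) set \<Rightarrow> bool" where
  "is_basis_cols C B d S \<longleftrightarrow>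
     (\<forall>j<d. B j \<in> S) \<and>
     (\<forall>c. (\<forall>i\<in>C. (\<Sum>j<d. c j * B j i) = 0) \<longrightarrow> (\<forall>j<d. c j = 0)) \<and>
     (\<forall>f\<in>S. \<exists>c. \<forall>i\<in>C. f i = (\<Sum>j<d. c j * B j i))"

text \<open>Parameter vectors theta in R^(I-1), organised in blocks theta_h in R^(d_h).\<close>
definition params :: "nat \<Rightarrow> (nat \<Rightarrow> nat) \<Rightarrow> (nat set \<Rightarrow> nat \<Rightarrow> real) set" where
  "params K Is = {\<theta>. \<forall>h j. (h \<notin> nonempty_subsets K \<or> j \<ge> dimU Is h) \<longrightarrow> \<theta> h j = 0}"

definition Utheta :: "nat \<Rightarrow> (nat \<Rightarrow> nat) \<Rightarrow> (nat set \<Rightarrow> nat \<Rightarrow> cell \<Rightarrow> real)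
    \<Rightarrow> (nat set \<Rightarrow> nat \<Rightarrow> real) \<Rightarrow> cell \<Rightarrow> real" where
  "Utheta K Is B \<theta> i = (\<Sum>h\<in>nonempty_subsets K. \<Sum>j<dimU Is h. B h j i * \<theta> h j)"

definition total :: "nat \<Rightarrow> (nat \<Rightarrow> nat) \<Rightarrow> (cell \<Rightarrow> nat) \<Rightarrow> nat" where
  "total K Is n = (\<Sum>i\<in>cells K Is. n i)"

definition loglik :: "nat \<Rightarrow> (nat \<Rightarrow> nat) \<Rightarrow> (nat set \<Rightarrow> nat \<Rightarrow> cell \<Rightarrow> real)
    \<Rightarrow> (cell \<Rightarrow> nat) \<Rightarrow> (nat set \<Rightarrow> nat \<Rightarrow> real) \<Rightarrow> real" where
  "loglik K Is B n \<theta> =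
     (\<Sum>i\<in>cells K Is. real (n i) * Utheta K Is B \<theta> i)
     - real (total K Is n) * ln (\<Sum>i\<in>cells K Is. exp (Utheta K Is B \<theta> i))
     + ln (fact (total K Is n)) - (\<Sum>i\<in>cells K Is. ln (fact (n i)))"

definition block_norm :: "(nat \<Rightarrow> nat) \<Rightarrow> (nat set \<Rightarrow> nat \<Rightarrow> real) \<Rightarrow> nat set \<Rightarrow> real" where
  "block_norm Is \<theta> h = sqrt (\<Sum>j<dimU Is h. (\<theta> h j)\<^sup>2)"

definition penalized :: "nat \<Rightarrow> (nat \<Rightarrow> nat) \<Rightarrow> (nat set \<Rightarrow> nat \<Rightarrow> cell \<Rightarrow> real)
    \<Rightarrow> (cell \<Rightarrow> nat) \<Rightarrow> real \<Rightarrow> (nat set \<Rightarrow> real) \<Rightarrow> (nat set \<Rightarrow> nat \<Rightarrow> real) \<Rightarrow> real" where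
  "penalized K Is B n lam lamh \<theta> =
     loglik K Is B n \<theta> / real (total K Is n)
     - lam * (\<Sum>h\<in>nonempty_subsets K. lamh h * block_norm Is \<theta> h)"

definition fitted :: "nat \<Rightarrow> (nat \<Rightarrow> nat) \<Rightarrow> (nat set \<Rightarrow> nat \<Rightarrow> cell \<Rightarrow> real)
    \<Rightarrow> (cell \<Rightarrow> nat) \<Rightarrow> (nat set \<Rightarrow> nat \<Rightarrow> real) \<Rightarrow> cell \<Rightarrow> real" where
  "fitted K Is B n \<theta> i =
     real (total K Is n) / (\<Sum>i'\<in>cells K Is. exp (Utheta K Is B \<theta> i')) * exp (Utheta K Is B \<theta> i)"

definition score :: "nat \<Rightarrow> (nat \<Rightarrow> nat) \<Rightarrow> (nat set \<Rightarrow> nat \<Rightarrow> cell \<Rightarrow> real)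
    \<Rightarrow> (cell \<Rightarrow> nat) \<Rightarrow> (nat set \<Rightarrow> nat \<Rightarrow> real) \<Rightarrow> nat set \<Rightarrow> nat \<Rightarrow> real" where
  "score K Is B n \<theta> h j =
     (\<Sum>i\<in>cells K Is. B h j i * (real (n i) - fitted K Is B n \<theta> i))"

end

theory Submission
  imports Defs "HOL-Analysis.Analysis"
begin

text \<open>The objective is concave: \<open>-log \<langle>exp(U\<theta>), 1\<rangle>\<close> is strictly concave except along
  directions in which \<open>U\<theta>\<close> changes by a constant, and the penalty is a weighted sum of norms.
  It is also coercive, because \<open>\<ell>\<close> is bounded above by \<open>log N! - \<Sum> log n\<^sub>i!\<close>, so a maximizer
  exists. The spaces \<open>U_h\<close> are mutually orthogonal and orthogonal to the constants, hence \<open>U\<theta>\<close>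
  determines \<open>\<theta>\<close> even modulo constants, and strict concavity at the midpoint of two maximizers
  makes the maximizer unique. The optimality conditions are the vanishing (resp. non-positivity)
  of directional derivatives at the maximizer along a coordinate of a nonzero block
  (resp. along the score of a zero block).\<close>

lemma finite_cells: "finite (cells K Is)"
  unfolding cells_def by (simp add: finite_PiE)

lemma cells_nonempty: "\<forall>k<K. 0 < Is k \<Longrightarrow> cells K Is \<noteq> {}"
  unfolding cells_def by (auto simp: PiE_eq_empty_iff)

lemma finite_nonempty_subsets: "finite (nonempty_subsets K)"
  by (rule finite_subset[of _ "Pow {..<K}"]) (auto simp: nonempty_subsets_def)

lemma restrict_eq_restrict_iff: "restrict i h = restrict j h \<longleftrightarrow> (\<forall>k\<in>h. i k = j k)"
  by (auto simp: restrict_def fun_eq_iff)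

lemma W_spaceD: "f \<in> W_space C h \<Longrightarrow> i \<in> C \<Longrightarrow> j \<in> C \<Longrightarrow> \<forall>k\<in>h. i k = j k \<Longrightarrow> f i = f j"
  unfolding W_space_def restrict_eq_restrict_iff by blast

lemma const_in_W_space: "(\<lambda>_. c) \<in> W_space C h"
  unfolding W_space_def by simp

lemma cinner_commute: "cinner C f g = cinner C g f"
  unfolding cinner_def by (simp add: mult.commute)

definition cell_fibre :: "nat \<Rightarrow> (nat \<Rightarrow> nat) \<Rightarrow> nat set \<Rightarrow> cell \<Rightarrow> cell set" where
  "cell_fibre K Is h x = {j \<in> cells K Is. \<forall>k\<in>h. j k = x k}"

lemma finite_cell_fibre: "finite (cell_fibre K Is h x)"
  unfolding cell_fibre_def using finite_cells by simp

lemma bij_betw_cell_fibre: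
  assumes "x \<in> cells K Is" "y \<in> cells K Is"
  shows "bij_betw (\<lambda>j k. if k \<in> h then y k else j k) (cell_fibre K Is h x) (cell_fibre K Is h y)"
  by (rule bij_betw_byWitness[where f'="\<lambda>j k. if k \<in> h then x k else j k"])
    (use assms in \<open>auto simp: cell_fibre_def cells_def PiE_iff extensional_def fun_eq_iff\<close>)

lemma card_cell_fibre_eq:
  "x \<in> cells K Is \<Longrightarrow> y \<in> cells K Is \<Longrightarrow> card (cell_fibre K Is h x) = card (cell_fibre K Is h y)"
  by (rule bij_betw_same_card[OF bij_betw_cell_fibre])

lemma fibre_sum_in_W_space:
  assumes f: "f \<in> W_space (cells K Is) h"
  shows "(\<lambda>x. \<Sum>j\<in>cell_fibre K Is h' x. f j) \<in> W_space (cells K Is) (h \<inter> h')"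
proof -
  have "(\<Sum>j\<in>cell_fibre K Is h' x. f j) = (\<Sum>j\<in>cell_fibre K Is h' y. f j)"
    if x: "x \<in> cells K Is" and y: "y \<in> cells K Is" and xy: "\<forall>k\<in>h \<inter> h'. x k = y k" for x y
  proof -
    let ?\<phi> = "\<lambda>j k. if k \<in> h' then y k else j k"
    have bij: "bij_betw ?\<phi> (cell_fibre K Is h' x) (cell_fibre K Is h' y)"
      by (rule bij_betw_cell_fibre[OF x y])
    have "f (?\<phi> j) = f j" if j: "j \<in> cell_fibre K Is h' x" for j
      using W_spaceD[OF f, of "?\<phi> j" j] bij_betwE[OF bij] j xy
      by (auto simp: cell_fibre_def)
    then show ?thesis
      using sum.reindex_bij_betw[OF bij, of f] by simp
  qed
  then show ?thesis
    unfolding W_space_def restrict_eq_restrict_iff by blast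
qed

lemma cinner_fibre_sum:
  assumes g: "g \<in> W_space (cells K Is) h'" and x0: "x0 \<in> cells K Is"
  shows "cinner (cells K Is) (\<lambda>x. \<Sum>j\<in>cell_fibre K Is h' x. f j) g
           = real (card (cell_fibre K Is h' x0)) * cinner (cells K Is) f g"
proof -
  let ?C = "cells K Is" and ?R = "\<lambda>x j. \<forall>k\<in>h'. j k = x k"
  have "cinner ?C (\<lambda>x. \<Sum>j\<in>cell_fibre K Is h' x. f j) g
      = (\<Sum>x\<in>?C. \<Sum>j\<in>?C. if ?R x j then f j * g j else 0)"
    unfolding cinner_def cell_fibre_def sum.inter_filter[OF finite_cells] sum_distrib_right
    by (intro sum.cong refl) (auto intro!: arg_cong[where f="(*) _"] W_spaceD[OF g])
  also have "\<dots> = (\<Sum>j\<in>?C. \<Sum>x\<in>?C. if ?R j x then f j * g j else 0)"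
    by (subst sum.swap) (intro sum.cong refl, metis)
  also have "\<dots> = (\<Sum>j\<in>?C. f j * g j * real (card (cell_fibre K Is h' j)))"
    unfolding cell_fibre_def sum.inter_filter[OF finite_cells, symmetric] by (simp add: mult.commute)
  also have "\<dots> = real (card (cell_fibre K Is h' x0)) * cinner ?C f g"
    unfolding cinner_def sum_distrib_left using card_cell_fibre_eq[OF _ x0]
    by (intro sum.cong refl) simp
  finally show ?thesis .
qed

text \<open>For incomparable \<open>h, h'\<close>, summing \<open>f \<in> U_h\<close> over the \<open>h'\<close>-fibres gives an element of
  \<open>W_(h \<inter> h')\<close>, to which \<open>g \<in> U_h'\<close> is orthogonal; since \<open>g\<close> is constant on \<open>h'\<close>-fibres that
  inner product is a positive multiple of \<open>\<langle>f, g\<rangle>\<close>.\<close>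
lemma U_space_orthogonal:
  assumes f: "f \<in> U_space (cells K Is) h" and g: "g \<in> U_space (cells K Is) h'" and "h \<noteq> h'"
  shows "cinner (cells K Is) f g = 0"
proof -
  let ?C = "cells K Is"
  have fW: "f \<in> W_space ?C h" and gW: "g \<in> W_space ?C h'"
    using f g unfolding U_space_def by auto
  consider "h \<subset> h'" | "h' \<subset> h" | "h \<inter> h' \<subset> h'"
    using \<open>h \<noteq> h'\<close> by blast
  then show ?thesis
  proof cases
    case 1
    then have "cinner ?C g f = 0" using g fW unfolding U_space_def by blast
    then show ?thesis by (simp add: cinner_commute)
  next
    case 2
    then show ?thesis using f gW unfolding U_space_def by blast
  next
    case 3
    show ?thesis
    proof (cases "?C = {}")
      case True
      then show ?thesis unfolding cinner_def by simp
    next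
      case False
      then obtain x0 where x0: "x0 \<in> ?C" by blast
      have "x0 \<in> cell_fibre K Is h' x0"
        using x0 unfolding cell_fibre_def by simp
      then have card_pos: "card (cell_fibre K Is h' x0) > 0"
        using finite_cell_fibre card_gt_0_iff by blast
      have "cinner ?C g (\<lambda>x. \<Sum>j\<in>cell_fibre K Is h' x. f j) = 0"
        using g 3 fibre_sum_in_W_space[OF fW] unfolding U_space_def by blast
      then show ?thesis
        using cinner_fibre_sum[OF gW x0, of f] card_pos by (simp add: cinner_commute)
    qed
  qed
qed

lemma cinner_sum_left: "cinner C (\<lambda>i. \<Sum>a\<in>A. F a i) g = (\<Sum>a\<in>A. cinner C (F a) g)"
  unfolding cinner_def sum_distrib_right by (rule sum.swap)

lemma cinner_lincomb:
  "cinner C (\<lambda>i. \<Sum>j\<in>J. a j * F j i) (\<lambda>i. \<Sum>j'\<in>J'. b j' * G j' i)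
     = (\<Sum>j\<in>J. \<Sum>j'\<in>J'. a j * b j' * cinner C (F j) (G j'))"
proof -
  have "cinner C (\<lambda>i. \<Sum>j\<in>J. a j * F j i) (\<lambda>i. \<Sum>j'\<in>J'. b j' * G j' i)
      = (\<Sum>i\<in>C. \<Sum>j\<in>J. \<Sum>j'\<in>J'. a j * b j' * (F j i * G j' i))"
    unfolding cinner_def by (simp add: sum_product mult_ac)
  also have "\<dots> = (\<Sum>j\<in>J. \<Sum>j'\<in>J'. \<Sum>i\<in>C. a j * b j' * (F j i * G j' i))"
    by (subst sum.swap) (intro sum.cong refl sum.swap)
  finally show ?thesis unfolding cinner_def by (simp add: sum_distrib_left)
qed

lemma Utheta_eq_0_imp_block_eq_0:
  assumes basis: "\<forall>h\<in>nonempty_subsets K.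
                  is_basis_cols (cells K Is) (B h) (dimU Is h) (U_space (cells K Is) h)"
    and zero: "\<forall>i\<in>cells K Is. Utheta K Is B \<delta> i = 0"
    and h: "h \<in> nonempty_subsets K" and j: "j < dimU Is h"
  shows "\<delta> h j = 0"
proof -
  let ?C = "cells K Is" and ?NS = "nonempty_subsets K"
  define v where "v = (\<lambda>h' i. \<Sum>j<dimU Is h'. \<delta> h' j * B h' j i)"
  have orth: "cinner ?C (v h') (v h) = 0" if "h' \<in> ?NS" "h' \<noteq> h" for h'
  proof -
    have "cinner ?C (B h' j1) (B h j2) = 0" if "j1 < dimU Is h'" "j2 < dimU Is h" for j1 j2
      using U_space_orthogonal \<open>h' \<in> ?NS\<close> \<open>h' \<noteq> h\<close> h basis that
      unfolding is_basis_cols_def by blast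
    then show ?thesis unfolding v_def cinner_lincomb by simp
  qed
  have "0 = cinner ?C (\<lambda>i. \<Sum>h'\<in>?NS. v h' i) (v h)"
    using zero unfolding cinner_def Utheta_def v_def by (simp add: mult.commute)
  also have "\<dots> = (\<Sum>h'\<in>?NS. cinner ?C (v h') (v h))"
    by (rule cinner_sum_left)
  also have "\<dots> = cinner ?C (v h) (v h)"
    by (subst sum.remove[OF finite_nonempty_subsets h]) (simp add: orth)
  finally have "(\<Sum>i\<in>?C. (v h i)\<^sup>2) = 0"
    unfolding cinner_def by (simp add: power2_eq_square)
  then have "\<forall>i\<in>?C. (\<Sum>j<dimU Is h. \<delta> h j * B h j i) = 0"
    using finite_cells by (simp add: sum_nonneg_eq_0_iff v_def)
  then show ?thesis
    using basis h j unfolding is_basis_cols_def by blast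
qed

lemma sum_Utheta_eq_0:
  assumes basis: "\<forall>h\<in>nonempty_subsets K.
                  is_basis_cols (cells K Is) (B h) (dimU Is h) (U_space (cells K Is) h)"
  shows "(\<Sum>i\<in>cells K Is. Utheta K Is B \<delta> i) = 0"
proof -
  have "(\<Sum>i\<in>cells K Is. B h j i) = 0" if "h \<in> nonempty_subsets K" "j < dimU Is h" for h j
  proof -
    have "B h j \<in> U_space (cells K Is) h" and "{} \<subset> h"
      using basis that unfolding is_basis_cols_def nonempty_subsets_def by auto
    then have "cinner (cells K Is) (B h j) (\<lambda>_. 1) = 0"
      unfolding U_space_def using const_in_W_space by blast
    then show ?thesis unfolding cinner_def by simp
  qed
  then have "(\<Sum>h\<in>nonempty_subsets K. \<Sum>j<dimU Is h. (\<Sum>i\<in>cells K Is. B h j i) * \<delta> h j) = 0"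
    by simp
  then show ?thesis
    unfolding Utheta_def sum_distrib_right
    by (subst sum.swap) (simp add: sum.swap[of _ "cells K Is"])
qed

lemma Utheta_lincomb:
  "Utheta K Is B (\<lambda>h j. a * \<theta>1 h j + b * \<theta>2 h j) i = a * Utheta K Is B \<theta>1 i + b * Utheta K Is B \<theta>2 i"
  unfolding Utheta_def by (simp add: algebra_simps sum.distrib sum_distrib_left)

lemma Utheta_add:
  "Utheta K Is B (\<lambda>h j. \<theta>1 h j + t * \<theta>2 h j) i = Utheta K Is B \<theta>1 i + t * Utheta K Is B \<theta>2 i"
  using Utheta_lincomb[of K Is B 1 \<theta>1 t \<theta>2 i] by simp

lemma params_lincomb:
  "\<theta>1 \<in> params K Is \<Longrightarrow> \<theta>2 \<in> params K Is \<Longrightarrow> (\<lambda>h j. a * \<theta>1 h j + b * \<theta>2 h j) \<in> params K Is"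
  unfolding params_def by auto

lemma params_add:
  "\<theta>1 \<in> params K Is \<Longrightarrow> \<theta>2 \<in> params K Is \<Longrightarrow> (\<lambda>h j. \<theta>1 h j + t * \<theta>2 h j) \<in> params K Is"
  unfolding params_def by auto

lemma Utheta_diff_const_imp_eq:
  assumes basis: "\<forall>h\<in>nonempty_subsets K.
                  is_basis_cols (cells K Is) (B h) (dimU Is h) (U_space (cells K Is) h)"
    and \<theta>1: "\<theta>1 \<in> params K Is" and \<theta>2: "\<theta>2 \<in> params K Is"
    and const: "\<forall>i\<in>cells K Is. Utheta K Is B \<theta>1 i - Utheta K Is B \<theta>2 i = c"
  shows "\<theta>1 = \<theta>2"
proof -
  define \<delta> where "\<delta> = (\<lambda>h j. \<theta>1 h j + (-1) * \<theta>2 h j)"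
  have U\<delta>: "i \<in> cells K Is \<Longrightarrow> Utheta K Is B \<delta> i = c" for i
    using const unfolding \<delta>_def Utheta_add by simp
  then have "real (card (cells K Is)) * c = 0"
    using sum_Utheta_eq_0[OF basis, of \<delta>] by simp
  then have "\<forall>i\<in>cells K Is. Utheta K Is B \<delta> i = 0"
    using U\<delta> finite_cells by (auto simp: card_eq_0_iff)
  then have \<delta>0: "\<delta> h j = 0" if "h \<in> nonempty_subsets K" "j < dimU Is h" for h j
    using Utheta_eq_0_imp_block_eq_0[OF basis _ that] by blast
  show ?thesis
  proof (intro ext)
    fix h j
    show "\<theta>1 h j = \<theta>2 h j"
    proof (cases "h \<in> nonempty_subsets K \<and> j < dimU Is h")
      case True
      then show ?thesis using \<delta>0 unfolding \<delta>_def by simp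
    next
      case False
      then show ?thesis using \<theta>1 \<theta>2 unfolding params_def by (auto simp: not_less)
    qed
  qed
qed

lemma block_norm_eq_L2_set: "block_norm Is \<theta> h = L2_set (\<theta> h) {..<dimU Is h}"
  unfolding block_norm_def L2_set_def ..

lemma block_norm_nonneg: "0 \<le> block_norm Is \<theta> h"
  unfolding block_norm_eq_L2_set by (rule L2_set_nonneg)

lemma block_norm_eq_0_iff: "block_norm Is \<theta> h = 0 \<longleftrightarrow> (\<forall>j<dimU Is h. \<theta> h j = 0)"
  unfolding block_norm_eq_L2_set by (auto simp: L2_set_eq_0_iff)

lemma abs_le_block_norm: "j < dimU Is h \<Longrightarrow> \<bar>\<theta> h j\<bar> \<le> block_norm Is \<theta> h"
proof -
  assume "j < dimU Is h"
  then have "(\<theta> h j)\<^sup>2 \<le> (\<Sum>j<dimU Is h. (\<theta> h j)\<^sup>2)"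
    by (intro member_le_sum) auto
  then show ?thesis
    unfolding block_norm_def using real_sqrt_le_mono by fastforce
qed

lemma block_norm_midpoint_le:
  "block_norm Is (\<lambda>h j. 1/2 * \<theta>1 h j + 1/2 * \<theta>2 h j) h \<le> (block_norm Is \<theta>1 h + block_norm Is \<theta>2 h) / 2"
  unfolding block_norm_eq_L2_set
  using L2_set_triangle_ineq[of "\<lambda>j. 1/2 * \<theta>1 h j" "\<lambda>j. 1/2 * \<theta>2 h j" "{..<dimU Is h}"]
    L2_set_right_distrib[of "1/2" "\<theta>1 h" "{..<dimU Is h}"] L2_set_right_distrib[of "1/2" "\<theta>2 h" "{..<dimU Is h}"]
  by simp

lemma lagrange_identity:
  fixes x y :: "'a \<Rightarrow> real"
  shows "(\<Sum>i\<in>A. \<Sum>j\<in>A. (x i * y j - x j * y i)\<^sup>2)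
     = 2 * ((\<Sum>i\<in>A. (x i)\<^sup>2) * (\<Sum>i\<in>A. (y i)\<^sup>2) - (\<Sum>i\<in>A. x i * y i)\<^sup>2)"
proof -
  have e: "(x i * y j - x j * y i)\<^sup>2 = (x i)\<^sup>2 * (y j)\<^sup>2 + (x j)\<^sup>2 * (y i)\<^sup>2 - 2 * ((x i * y i) * (x j * y j))" for i j
    by (simp add: power2_eq_square algebra_simps)
  have s1: "(\<Sum>i\<in>A. \<Sum>j\<in>A. (x i)\<^sup>2 * (y j)\<^sup>2) = (\<Sum>i\<in>A. (x i)\<^sup>2) * (\<Sum>i\<in>A. (y i)\<^sup>2)"
    by (rule sum_product[symmetric])
  have s2: "(\<Sum>i\<in>A. \<Sum>j\<in>A. (x j)\<^sup>2 * (y i)\<^sup>2) = (\<Sum>i\<in>A. (x i)\<^sup>2) * (\<Sum>i\<in>A. (y i)\<^sup>2)"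
    by (subst sum.swap) (rule s1)
  have s3: "(\<Sum>i\<in>A. \<Sum>j\<in>A. (x i * y i) * (x j * y j)) = (\<Sum>i\<in>A. x i * y i)\<^sup>2"
    unfolding power2_eq_square by (rule sum_product[symmetric])
  have "(\<Sum>i\<in>A. \<Sum>j\<in>A. (x i)\<^sup>2 * (y j)\<^sup>2 + (x j)\<^sup>2 * (y i)\<^sup>2 - 2 * ((x i * y i) * (x j * y j)))
     = (\<Sum>i\<in>A. \<Sum>j\<in>A. (x i)\<^sup>2 * (y j)\<^sup>2) + (\<Sum>i\<in>A. \<Sum>j\<in>A. (x j)\<^sup>2 * (y i)\<^sup>2)
       - 2 * (\<Sum>i\<in>A. \<Sum>j\<in>A. (x i * y i) * (x j * y j))"
    by (simp only: sum.distrib sum_subtractf sum_distrib_left)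
  then show ?thesis unfolding e s1 s2 s3 by simp
qed

text \<open>By Lagrange's identity, \<open>(\<Sum> exp ((a + b) / 2))\<^sup>2 < \<Sum> exp a \<cdot> \<Sum> exp b\<close> unless \<open>a - b\<close> is
  constant on \<open>A\<close>.\<close>
lemma ln_sum_exp_midpoint_less:
  fixes a b :: "'a \<Rightarrow> real"
  assumes A: "finite A" "i \<in> A" "j \<in> A" and ij: "a i - b i \<noteq> a j - b j"
  shows "2 * ln (\<Sum>k\<in>A. exp ((a k + b k) / 2)) < ln (\<Sum>k\<in>A. exp (a k)) + ln (\<Sum>k\<in>A. exp (b k))"
proof -
  define Sm where "Sm = (\<Sum>k\<in>A. exp ((a k + b k) / 2))"
  define Sa where "Sa = (\<Sum>k\<in>A. exp (a k))"
  define Sb where "Sb = (\<Sum>k\<in>A. exp (b k))"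
  define x where "x = (\<lambda>k. exp (a k / 2))"
  define y where "y = (\<lambda>k. exp (b k / 2))"
  have xy: "x k * y k = exp ((a k + b k) / 2)" and xx: "(x k)\<^sup>2 = exp (a k)" and yy: "(y k)\<^sup>2 = exp (b k)" for k
    unfolding x_def y_def power2_eq_square by (simp_all flip: exp_add add: add_divide_distrib)
  have "x i * y j \<noteq> x j * y i"
    using ij unfolding x_def y_def by (auto simp flip: exp_add)
  then have "0 < (\<Sum>j'\<in>A. (x i * y j' - x j' * y i)\<^sup>2)"
    using A by (intro sum_pos2[of A j]) auto
  then have "0 < (\<Sum>i'\<in>A. \<Sum>j'\<in>A. (x i' * y j' - x j' * y i')\<^sup>2)"
    by (rule sum_pos2[OF A(1,2)]) (auto intro: sum_nonneg)
  then have lt: "Sm\<^sup>2 < Sa * Sb"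
    unfolding lagrange_identity xy xx yy Sm_def Sa_def Sb_def by simp
  have pos: "0 < Sm" "0 < Sa" "0 < Sb"
    using A unfolding Sm_def Sa_def Sb_def by (auto intro!: sum_pos)
  have "2 * ln Sm = ln (Sm\<^sup>2)"
    using pos by (simp add: ln_realpow)
  also have "\<dots> < ln (Sa * Sb)"
    using pos lt by simp
  also have "\<dots> = ln Sa + ln Sb"
    using pos by (simp add: ln_mult)
  finally show ?thesis unfolding Sm_def Sa_def Sb_def .
qed

lemma sum_exp_Utheta_pos: "cells K Is \<noteq> {} \<Longrightarrow> 0 < (\<Sum>i\<in>cells K Is. exp (Utheta K Is B \<theta> i))"
  using finite_cells by (intro sum_pos) auto

lemma loglik_le:
  assumes "cells K Is \<noteq> {}"
  shows "loglik K Is B n \<theta> \<le> ln (fact (total K Is n)) - (\<Sum>i\<in>cells K Is. ln (fact (n i)))"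
proof -
  let ?C = "cells K Is" and ?u = "Utheta K Is B \<theta>"
  define S where "S = (\<Sum>i\<in>?C. exp (?u i))"
  have S: "0 < S" unfolding S_def using sum_exp_Utheta_pos[OF assms] .
  have "?u i \<le> ln S" if "i \<in> ?C" for i
  proof -
    have "exp (?u i) \<le> S"
      unfolding S_def using that finite_cells by (intro member_le_sum) auto
    then show ?thesis using S by (simp add: ln_ge_iff)
  qed
  then have "(\<Sum>i\<in>?C. real (n i) * ?u i) \<le> (\<Sum>i\<in>?C. real (n i) * ln S)"
    by (intro sum_mono mult_left_mono) auto
  then show ?thesis
    unfolding loglik_def total_def S_def by (simp add: sum_distrib_right)
qed

lemma penalized_eq:
  assumes "total K Is n \<ge> 1"
  shows "penalized K Is B n lam lamh \<theta> =
    (\<Sum>i\<in>cells K Is. real (n i) * Utheta K Is B \<theta> i) / real (total K Is n)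
    - ln (\<Sum>i\<in>cells K Is. exp (Utheta K Is B \<theta> i))
    + (ln (fact (total K Is n)) - (\<Sum>i\<in>cells K Is. ln (fact (n i)))) / real (total K Is n)
    - lam * (\<Sum>h\<in>nonempty_subsets K. lamh h * block_norm Is \<theta> h)"
  using assms unfolding penalized_def loglik_def
  by (simp add: diff_divide_distrib add_divide_distrib)

lemma penalized_midpoint_gt:
  assumes N: "total K Is n \<ge> 1" and lam: "lam \<ge> 0" and lamh: "\<forall>h\<in>nonempty_subsets K. lamh h \<ge> 0"
    and ij: "i \<in> cells K Is" "j \<in> cells K Is"
    and noncst: "Utheta K Is B \<theta>1 i - Utheta K Is B \<theta>2 i \<noteq> Utheta K Is B \<theta>1 j - Utheta K Is B \<theta>2 j"
  shows "(penalized K Is B n lam lamh \<theta>1 + penalized K Is B n lam lamh \<theta>2) / 2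
           < penalized K Is B n lam lamh (\<lambda>h j. 1/2 * \<theta>1 h j + 1/2 * \<theta>2 h j)"
proof -
  let ?C = "cells K Is" and ?NS = "nonempty_subsets K" and ?N = "real (total K Is n)"
  define \<theta>m where "\<theta>m = (\<lambda>h j. 1/2 * \<theta>1 h j + 1/2 * \<theta>2 h j)"
  define lin where "lin = (\<lambda>\<theta>. (\<Sum>i\<in>?C. real (n i) * Utheta K Is B \<theta> i) / ?N)"
  define lse where "lse = (\<lambda>\<theta>. ln (\<Sum>i\<in>?C. exp (Utheta K Is B \<theta> i)))"
  define pen where "pen = (\<lambda>\<theta>. lam * (\<Sum>h\<in>?NS. lamh h * block_norm Is \<theta> h))"
  define c where "c = (ln (fact (total K Is n)) - (\<Sum>i\<in>?C. ln (fact (n i)))) / ?N"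
  have Um: "Utheta K Is B \<theta>m k = (Utheta K Is B \<theta>1 k + Utheta K Is B \<theta>2 k) / 2" for k
    unfolding \<theta>m_def Utheta_lincomb by simp
  have lin_mid: "lin \<theta>m = (lin \<theta>1 + lin \<theta>2) / 2"
    unfolding lin_def Um by (simp add: sum_divide_distrib[symmetric] sum.distrib algebra_simps add_divide_distrib)
  have lse_mid: "2 * lse \<theta>m < lse \<theta>1 + lse \<theta>2"
    unfolding lse_def Um
    using ln_sum_exp_midpoint_less[where a="Utheta K Is B \<theta>1" and b="Utheta K Is B \<theta>2", OF finite_cells ij noncst] .
  have pen_mid: "pen \<theta>m \<le> (pen \<theta>1 + pen \<theta>2) / 2"
  proof -
    have "lamh h * block_norm Is \<theta>m h \<le> lamh h * ((block_norm Is \<theta>1 h + block_norm Is \<theta>2 h) / 2)"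
      if "h \<in> ?NS" for h
      unfolding \<theta>m_def using lamh that by (intro mult_left_mono block_norm_midpoint_le) auto
    then have "(\<Sum>h\<in>?NS. lamh h * block_norm Is \<theta>m h)
        \<le> (\<Sum>h\<in>?NS. lamh h * ((block_norm Is \<theta>1 h + block_norm Is \<theta>2 h) / 2))"
      by (rule sum_mono)
    also have "\<dots> = (\<Sum>h\<in>?NS. lamh h * block_norm Is \<theta>1 h) / 2 + (\<Sum>h\<in>?NS. lamh h * block_norm Is \<theta>2 h) / 2"
      by (simp add: add_divide_distrib distrib_left sum.distrib flip: sum_divide_distrib)
    finally show ?thesis
      unfolding pen_def using lam by (simp add: mult.assoc mult_left_mono flip: distrib_left add_divide_distrib)
  qed
  have eq: "penalized K Is B n lam lamh \<theta> = lin \<theta> - lse \<theta> + c - pen \<theta>" for \<theta>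
    unfolding penalized_eq[OF N] lin_def lse_def pen_def c_def ..
  show ?thesis
    unfolding \<theta>m_def[symmetric] eq using lin_mid lse_mid pen_mid by (simp add: field_simps)
qed

lemma penalized_maximizer_unique:
  assumes basis: "\<forall>h\<in>nonempty_subsets K.
                  is_basis_cols (cells K Is) (B h) (dimU Is h) (U_space (cells K Is) h)"
    and N: "total K Is n \<ge> 1" and lam: "lam \<ge> 0" and lamh: "\<forall>h\<in>nonempty_subsets K. lamh h \<ge> 0"
    and \<theta>1: "\<theta>1 \<in> params K Is" and \<theta>2: "\<theta>2 \<in> params K Is"
    and max1: "\<forall>\<theta>\<in>params K Is. penalized K Is B n lam lamh \<theta> \<le> penalized K Is B n lam lamh \<theta>1"
    and max2: "\<forall>\<theta>\<in>params K Is. penalized K Is B n lam lamh \<theta> \<le> penalized K Is B n lam lamh \<theta>2"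
  shows "\<theta>1 = \<theta>2"
proof (cases "cells K Is = {}")
  case True
  then show ?thesis
    using Utheta_diff_const_imp_eq[OF basis \<theta>1 \<theta>2] by simp
next
  case False
  then obtain i0 where i0: "i0 \<in> cells K Is" by blast
  let ?P = "penalized K Is B n lam lamh"
  have "Utheta K Is B \<theta>1 i - Utheta K Is B \<theta>2 i = Utheta K Is B \<theta>1 i0 - Utheta K Is B \<theta>2 i0"
    if i: "i \<in> cells K Is" for i
  proof (rule ccontr)
    assume "\<not> ?thesis"
    then have "(?P \<theta>1 + ?P \<theta>2) / 2 < ?P (\<lambda>h j. 1/2 * \<theta>1 h j + 1/2 * \<theta>2 h j)"
      by (rule penalized_midpoint_gt[OF N lam lamh i i0])
    moreover have "?P (\<lambda>h j. 1/2 * \<theta>1 h j + 1/2 * \<theta>2 h j) \<le> ?P \<theta>1"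
      using max1 params_lincomb[OF \<theta>1 \<theta>2] by blast
    moreover have "?P \<theta>1 = ?P \<theta>2"
      using max1 max2 \<theta>1 \<theta>2 by (meson order_antisym)
    ultimately show False by simp
  qed
  then show ?thesis
    using Utheta_diff_const_imp_eq[OF basis \<theta>1 \<theta>2] by blast
qed

lemma continuous_on_apply2: "continuous_on S (\<lambda>\<theta>::'a \<Rightarrow> 'b \<Rightarrow> real. \<theta> h j)"
proof -
  have "continuous_on UNIV ((\<lambda>y::'b \<Rightarrow> real. y j) \<circ> (\<lambda>\<theta>::'a \<Rightarrow> 'b \<Rightarrow> real. \<theta> h))"
    by (intro continuous_on_compose continuous_on_subset[OF continuous_on_product_coordinates]) auto
  then have "continuous_on UNIV (\<lambda>\<theta>::'a \<Rightarrow> 'b \<Rightarrow> real. \<theta> h j)"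
    by (simp add: o_def)
  then show ?thesis
    by (rule continuous_on_subset) auto
qed

lemma compact_PiE_UNIV:
  fixes X :: "'a \<Rightarrow> 'b::topological_space set"
  assumes "\<And>i. compact (X i)"
  shows "compact (PiE UNIV X)"
proof -
  have "compactin (product_topology (\<lambda>i. euclidean) UNIV) (PiE UNIV X)"
    unfolding compactin_PiE using assms by simp
  then show ?thesis unfolding euclidean_product_topology by simp
qed

lemma continuous_attains_sup_on_superlevel:
  fixes f :: "'a::topological_space \<Rightarrow> real"
  assumes "compact C" "C \<subseteq> S" "z \<in> S" "continuous_on C f"
    and superlevel: "\<And>x. x \<in> S \<Longrightarrow> f z \<le> f x \<Longrightarrow> x \<in> C"
  shows "\<exists>x\<in>S. \<forall>y\<in>S. f y \<le> f x"
proof -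
  have "z \<in> C" using superlevel \<open>z \<in> S\<close> by blast
  then obtain x where x: "x \<in> C" "\<forall>y\<in>C. f y \<le> f x"
    using continuous_attains_sup[OF \<open>compact C\<close> _ \<open>continuous_on C f\<close>] by blast
  have "f y \<le> f x" if "y \<in> S" for y
    using x superlevel[OF that] \<open>z \<in> C\<close> by force
  then show ?thesis using x \<open>C \<subseteq> S\<close> by blast
qed

lemma continuous_on_penalized:
  assumes "cells K Is \<noteq> {}" and "total K Is n \<ge> 1"
  shows "continuous_on S (penalized K Is B n lam lamh)"
proof -
  have "(\<Sum>i\<in>cells K Is. exp (Utheta K Is B \<theta> i)) \<noteq> 0" for \<theta>
    using sum_exp_Utheta_pos[OF assms(1)] by (metis less_irrefl)
  then show ?thesis
    unfolding penalized_def[abs_def] loglik_def block_norm_def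
    using assms(2) unfolding Utheta_def by (auto intro!: continuous_intros continuous_on_apply2)
qed

lemma penalized_le:
  assumes "cells K Is \<noteq> {}" and "total K Is n \<ge> 1"
  shows "penalized K Is B n lam lamh \<theta>
    \<le> (ln (fact (total K Is n)) - (\<Sum>i\<in>cells K Is. ln (fact (n i)))) / real (total K Is n)
       - lam * (\<Sum>h\<in>nonempty_subsets K. lamh h * block_norm Is \<theta> h)"
  using loglik_le[OF assms(1), of B n \<theta>] assms(2)
  unfolding penalized_def by (simp add: divide_right_mono)

text \<open>Coercivity: on the superlevel set of the origin the penalty bounds each block norm by
  \<open>r h\<close>, so a maximizer over that compact box is a global maximizer.\<close>
lemma penalized_has_maximizer:
  assumes ne: "cells K Is \<noteq> {}" and N: "total K Is n \<ge> 1" and lam: "lam > 0"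
    and lamh: "\<forall>h\<in>nonempty_subsets K. lamh h > 0"
  shows "\<exists>\<theta>\<in>params K Is. \<forall>\<theta>'\<in>params K Is. penalized K Is B n lam lamh \<theta>' \<le> penalized K Is B n lam lamh \<theta>"
proof -
  let ?P = "penalized K Is B n lam lamh" and ?NS = "nonempty_subsets K"
  define c0 where "c0 = (ln (fact (total K Is n)) - (\<Sum>i\<in>cells K Is. ln (fact (n i)))) / real (total K Is n)"
  define z :: "nat set \<Rightarrow> nat \<Rightarrow> real" where "z = (\<lambda>h j. 0)"
  define r where "r = (\<lambda>h. (c0 - ?P z) / (lam * lamh h))"
  define box where "box = PiE UNIV (\<lambda>h. PiE UNIV (\<lambda>j. if h \<in> ?NS \<and> j < dimU Is h then {-r h..r h} else {0}))"
  have box_iff: "\<theta> \<in> box \<longleftrightarrow> (\<forall>h j. \<theta> h j \<in> (if h \<in> ?NS \<and> j < dimU Is h then {-r h..r h} else {0}))" for \<theta>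
    unfolding box_def by (auto simp: PiE_iff)
  have "compact box"
    unfolding box_def by (intro compact_PiE_UNIV) auto
  moreover have "box \<subseteq> params K Is"
  proof
    fix \<theta> assume "\<theta> \<in> box"
    then have mem: "\<theta> h j \<in> (if h \<in> ?NS \<and> j < dimU Is h then {-r h..r h} else {0})" for h j
      unfolding box_iff by blast
    have "\<theta> h j = 0" if "h \<notin> ?NS \<or> dimU Is h \<le> j" for h j
      using mem[of h j] that by auto
    then show "\<theta> \<in> params K Is"
      unfolding params_def by blast
  qed
  moreover have "z \<in> params K Is"
    unfolding z_def params_def by simp
  moreover have "\<theta> \<in> box" if \<theta>: "\<theta> \<in> params K Is" and sup: "?P z \<le> ?P \<theta>" for \<theta>
  proof -
    have "\<bar>\<theta> h j\<bar> \<le> r h" if h: "h \<in> ?NS" and j: "j < dimU Is h" for h j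
    proof -
      have "lamh h * block_norm Is \<theta> h \<le> (\<Sum>h\<in>?NS. lamh h * block_norm Is \<theta> h)"
        using h lamh finite_nonempty_subsets
        by (intro member_le_sum mult_nonneg_nonneg block_norm_nonneg) (auto intro: less_imp_le)
      then have "lam * (lamh h * block_norm Is \<theta> h) \<le> lam * (\<Sum>h\<in>?NS. lamh h * block_norm Is \<theta> h)"
        using lam by (intro mult_left_mono) auto
      then have "lam * (lamh h * block_norm Is \<theta> h) \<le> c0 - ?P z"
        using penalized_le[OF ne N, of B lam lamh \<theta>] sup unfolding c0_def by linarith
      then have "block_norm Is \<theta> h \<le> r h"
        using lam lamh h unfolding r_def by (simp add: field_simps)
      then show ?thesis using abs_le_block_norm[OF j] by (rule order_trans[rotated])
    qed
    then show ?thesis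
      using \<theta> unfolding box_iff params_def by (auto simp: abs_le_iff not_le minus_le_iff)
  qed
  ultimately show ?thesis
    by (rule continuous_attains_sup_on_superlevel[OF _ _ _ continuous_on_penalized[OF ne N]])
qed

lemma sum_score_eq:
  "(\<Sum>h\<in>nonempty_subsets K. \<Sum>j<dimU Is h. v h j * score K Is B n \<theta> h j)
   = (\<Sum>i\<in>cells K Is. Utheta K Is B v i * (real (n i) - fitted K Is B n \<theta> i))"
proof -
  have "(\<Sum>h\<in>nonempty_subsets K. \<Sum>j<dimU Is h. v h j * score K Is B n \<theta> h j)
     = (\<Sum>h\<in>nonempty_subsets K. \<Sum>j<dimU Is h. \<Sum>i\<in>cells K Is. B h j i * v h j * (real (n i) - fitted K Is B n \<theta> i))"
    unfolding score_def by (simp add: sum_distrib_left mult_ac)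
  also have "\<dots> = (\<Sum>i\<in>cells K Is. \<Sum>h\<in>nonempty_subsets K. \<Sum>j<dimU Is h. B h j i * v h j * (real (n i) - fitted K Is B n \<theta> i))"
    by (subst sum.swap) (simp add: sum.swap[of _ "cells K Is"])
  also have "\<dots> = (\<Sum>i\<in>cells K Is. Utheta K Is B v i * (real (n i) - fitted K Is B n \<theta> i))"
    unfolding Utheta_def by (simp add: sum_distrib_right)
  finally show ?thesis .
qed

lemma loglik_has_real_derivative:
  assumes "cells K Is \<noteq> {}"
  shows "((\<lambda>t. loglik K Is B n (\<lambda>h j. \<theta> h j + t * v h j)) has_real_derivative
     (\<Sum>h\<in>nonempty_subsets K. \<Sum>j<dimU Is h. v h j * score K Is B n \<theta> h j)) (at 0)"
proof -
  let ?C = "cells K Is"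
  define a where "a = Utheta K Is B \<theta>"
  define b where "b = Utheta K Is B v"
  define N where "N = real (total K Is n)"
  define c :: real where "c = ln (fact (total K Is n)) - (\<Sum>i\<in>?C. ln (fact (n i)))"
  define S where "S = (\<Sum>i\<in>?C. exp (a i))"
  have S: "0 < S" unfolding S_def a_def using sum_exp_Utheta_pos[OF assms] .
  have eq: "loglik K Is B n (\<lambda>h j. \<theta> h j + t * v h j) =
     (\<Sum>i\<in>?C. real (n i) * (a i + t * b i)) - N * ln (\<Sum>i\<in>?C. exp (a i + t * b i)) + c" for t
    unfolding loglik_def a_def b_def N_def c_def Utheta_add by simp
  have "((\<lambda>t. (\<Sum>i\<in>?C. real (n i) * (a i + t * b i)) - N * ln (\<Sum>i\<in>?C. exp (a i + t * b i)) + c)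
     has_real_derivative (\<Sum>i\<in>?C. real (n i) * b i) - N * ((\<Sum>i\<in>?C. exp (a i) * b i) / S)) (at 0)"
    by (rule derivative_eq_intros refl | simp add: S[unfolded S_def])+ (simp add: S_def mult_ac)
  moreover have "(\<Sum>i\<in>?C. real (n i) * b i) - N * ((\<Sum>i\<in>?C. exp (a i) * b i) / S)
      = (\<Sum>i\<in>?C. b i * (real (n i) - fitted K Is B n \<theta> i))"
    unfolding fitted_def a_def[symmetric] S_def[symmetric] N_def[symmetric]
    by (simp add: algebra_simps sum_subtractf sum_distrib_left sum_divide_distrib)
  ultimately show ?thesis
    unfolding eq sum_score_eq b_def by simp
qed

lemma L2_set_has_real_derivative_coordinate:
  assumes A: "finite A" "j \<in> A" and pos: "0 < L2_set f A"
  shows "((\<lambda>t. L2_set (\<lambda>j'. f j' + t * (if j' = j then 1 else 0)) A)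
           has_real_derivative f j / L2_set f A) (at 0)"
proof -
  define Q where "Q = (\<lambda>t. \<Sum>j'\<in>A. (f j' + t * (if j' = j then 1 else 0))\<^sup>2)"
  have Q0: "Q 0 = (L2_set f A)\<^sup>2"
    unfolding Q_def L2_set_def by (simp add: sum_nonneg)
  have "(Q has_real_derivative (\<Sum>j'\<in>A. 2 * (f j' + 0 * (if j' = j then 1 else 0)) * (if j' = j then 1 else 0))) (at 0)"
    unfolding Q_def by (rule derivative_eq_intros refl | simp add: mult_ac)+
  then have dQ: "(Q has_real_derivative 2 * f j) (at 0)"
    using A by (simp add: if_distrib cong: if_cong)
  have "0 < Q 0"
    using pos Q0 by simp
  then have "((\<lambda>t. sqrt (Q t)) has_real_derivative inverse (sqrt (Q 0)) / 2 * (2 * f j)) (at 0)"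
    using DERIV_chain2[OF DERIV_real_sqrt dQ] by blast
  moreover have "inverse (sqrt (Q 0)) / 2 * (2 * f j) = f j / L2_set f A"
    using pos unfolding Q0 by (simp add: field_simps)
  moreover have "(\<lambda>t. sqrt (Q t)) = (\<lambda>t. L2_set (\<lambda>j'. f j' + t * (if j' = j then 1 else 0)) A)"
    unfolding Q_def L2_set_def ..
  ultimately show ?thesis by simp
qed

lemma penalized_has_real_derivative_coordinate:
  assumes ne: "cells K Is \<noteq> {}"
    and h: "h \<in> nonempty_subsets K" and j: "j < dimU Is h" and pos: "0 < block_norm Is \<theta> h"
  shows "((\<lambda>t. penalized K Is B n lam lamh (\<lambda>h' j'. \<theta> h' j' + t * (if h' = h \<and> j' = j then 1 else 0)))
           has_real_derivative score K Is B n \<theta> h j / real (total K Is n)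
                               - lam * (lamh h * (\<theta> h j / block_norm Is \<theta> h))) (at 0)"
proof -
  let ?NS = "nonempty_subsets K" and ?e = "\<lambda>h' j'. if h' = h \<and> j' = j then 1 else (0::real)"
  have "(\<Sum>h'\<in>?NS. \<Sum>j'<dimU Is h'. ?e h' j' * score K Is B n \<theta> h' j') = score K Is B n \<theta> h j"
    using h j finite_nonempty_subsets
    by (simp add: of_bool_def[symmetric] of_bool_conj mult.assoc flip: sum_distrib_left)
  then have dl: "((\<lambda>t. loglik K Is B n (\<lambda>h' j'. \<theta> h' j' + t * ?e h' j')) has_real_derivative
      score K Is B n \<theta> h j) (at 0)"
    using loglik_has_real_derivative[OF ne, of B n \<theta> ?e] by simp
  define D where "D = (\<lambda>h'. if h' = h then lamh h * (\<theta> h j / block_norm Is \<theta> h) else 0)"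
  have db: "((\<lambda>t. lamh h' * block_norm Is (\<lambda>h' j'. \<theta> h' j' + t * ?e h' j') h')
      has_real_derivative D h') (at 0)" for h'
  proof (cases "h' = h")
    case True
    have "((\<lambda>t. L2_set (\<lambda>j'. \<theta> h j' + t * (if j' = j then 1 else 0)) {..<dimU Is h})
        has_real_derivative \<theta> h j / block_norm Is \<theta> h) (at 0)"
      using L2_set_has_real_derivative_coordinate[of "{..<dimU Is h}" j "\<theta> h"] j pos
      unfolding block_norm_eq_L2_set by simp
    then show ?thesis
      unfolding D_def block_norm_eq_L2_set using True DERIV_cmult by fastforce
  next
    case False
    then show ?thesis unfolding D_def block_norm_def by simp
  qed
  have "((\<lambda>t. \<Sum>h'\<in>?NS. lamh h' * block_norm Is (\<lambda>h' j'. \<theta> h' j' + t * ?e h' j') h')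
      has_real_derivative (\<Sum>h'\<in>?NS. D h')) (at 0)"
    by (rule DERIV_sum) (rule db)
  moreover have "(\<Sum>h'\<in>?NS. D h') = lamh h * (\<theta> h j / block_norm Is \<theta> h)"
    using h finite_nonempty_subsets by (simp add: D_def)
  ultimately have "((\<lambda>t. \<Sum>h'\<in>?NS. lamh h' * block_norm Is (\<lambda>h' j'. \<theta> h' j' + t * ?e h' j') h')
      has_real_derivative lamh h * (\<theta> h j / block_norm Is \<theta> h)) (at 0)"
    by simp
  from DERIV_diff[OF DERIV_cdivide[OF dl] DERIV_cmult[OF this]]
  show ?thesis
    unfolding penalized_def .
qed

lemma penalized_maximizer_stationary:
  assumes ne: "cells K Is \<noteq> {}"
    and \<theta>: "\<theta> \<in> params K Is"
    and max: "\<forall>\<theta>'\<in>params K Is. penalized K Is B n lam lamh \<theta>' \<le> penalized K Is B n lam lamh \<theta>"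
    and h: "h \<in> nonempty_subsets K" and j: "j < dimU Is h" and pos: "0 < block_norm Is \<theta> h"
  shows "- score K Is B n \<theta> h j / real (total K Is n) + lam * lamh h * \<theta> h j / block_norm Is \<theta> h = 0"
proof -
  let ?e = "\<lambda>h' j'. if h' = h \<and> j' = j then 1 else (0::real)"
  have "?e \<in> params K Is"
    using h j unfolding params_def by auto
  then have "\<forall>t. \<bar>0 - t\<bar> < 1 \<longrightarrow> penalized K Is B n lam lamh (\<lambda>h' j'. \<theta> h' j' + t * ?e h' j')
                  \<le> penalized K Is B n lam lamh (\<lambda>h' j'. \<theta> h' j' + 0 * ?e h' j')"
    using max params_add[OF \<theta>] by simp
  from DERIV_local_max[OF penalized_has_real_derivative_coordinate[OF ne h j pos] zero_less_one this]
  show ?thesis by simp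
qed

lemma penalized_add_scaled_zero_block:
  assumes h: "h \<in> nonempty_subsets K" and zero: "\<forall>j<dimU Is h. \<theta> h j = 0"
    and supp: "\<forall>h'. h' \<noteq> h \<longrightarrow> (\<forall>j. v h' j = 0)" and t: "0 \<le> t"
  shows "penalized K Is B n lam lamh (\<lambda>h' j'. \<theta> h' j' + t * v h' j')
    = loglik K Is B n (\<lambda>h' j'. \<theta> h' j' + t * v h' j') / real (total K Is n)
      - lam * (\<Sum>h'\<in>nonempty_subsets K. lamh h' * block_norm Is \<theta> h')
      - lam * (lamh h * (t * block_norm Is v h))"
proof -
  let ?NS = "nonempty_subsets K" and ?\<theta>t = "\<lambda>h' j'. \<theta> h' j' + t * v h' j'"
  have "L2_set (?\<theta>t h) {..<dimU Is h} = L2_set (\<lambda>j. t * v h j) {..<dimU Is h}"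
    using zero by (intro L2_set_cong) auto
  then have "block_norm Is ?\<theta>t h = t * block_norm Is v h"
    unfolding block_norm_eq_L2_set by (simp add: L2_set_right_distrib[OF t])
  moreover have "block_norm Is \<theta> h = 0"
    using zero block_norm_eq_0_iff by blast
  moreover have "block_norm Is ?\<theta>t h' = block_norm Is \<theta> h'" if "h' \<noteq> h" for h'
    using supp that unfolding block_norm_def by simp
  ultimately have "(\<Sum>h'\<in>?NS. lamh h' * block_norm Is ?\<theta>t h')
      = (\<Sum>h'\<in>?NS. lamh h' * block_norm Is \<theta> h') + lamh h * (t * block_norm Is v h)"
    using h finite_nonempty_subsets by (simp add: sum.remove[of ?NS h])
  then show ?thesis
    unfolding penalized_def by (simp add: algebra_simps)
qed

text \<open>If the score of a zero block were too large, moving into that block along the score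
  would increase the objective at rate \<open>S (S/N - \<lambda>\<lambda>\<^sub>h) > 0\<close>, where \<open>S\<close> is the norm of the score.\<close>
lemma penalized_maximizer_score_le:
  assumes ne: "cells K Is \<noteq> {}" and N: "total K Is n \<ge> 1" and lam: "0 \<le> lam" and lamh: "0 \<le> lamh h"
    and \<theta>: "\<theta> \<in> params K Is"
    and max: "\<forall>\<theta>'\<in>params K Is. penalized K Is B n lam lamh \<theta>' \<le> penalized K Is B n lam lamh \<theta>"
    and h: "h \<in> nonempty_subsets K" and zero: "\<forall>j<dimU Is h. \<theta> h j = 0"
  shows "sqrt (\<Sum>j<dimU Is h. (score K Is B n \<theta> h j)\<^sup>2) / real (total K Is n) \<le> lam * lamh h"
proof (rule ccontr)
  let ?NS = "nonempty_subsets K" and ?N = "real (total K Is n)" and ?P = "penalized K Is B n lam lamh"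
  define s where "s = score K Is B n \<theta> h"
  define S where "S = sqrt (\<Sum>j<dimU Is h. (s j)\<^sup>2)"
  assume "\<not> ?thesis"
  then have gt: "lam * lamh h < S / ?N"
    unfolding S_def s_def by simp
  moreover have "0 \<le> lam * lamh h"
    using lam lamh by simp
  ultimately have "0 < S / ?N"
    by linarith
  then have S: "0 < S"
    using N by (simp add: zero_less_divide_iff)
  define v where "v = (\<lambda>h' j'. if h' = h \<and> j' < dimU Is h then s j' else 0)"
  have "v \<in> params K Is"
    unfolding v_def params_def using h by auto
  have bn_v: "block_norm Is v h = S"
    unfolding block_norm_def S_def v_def by simp
  define pen0 where "pen0 = (\<Sum>h'\<in>?NS. lamh h' * block_norm Is \<theta> h')"
  define f where "f = (\<lambda>t. loglik K Is B n (\<lambda>h' j'. \<theta> h' j' + t * v h' j') / ?N - lam * pen0 - lam * (lamh h * (t * S)))"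
  have supp: "\<forall>h'. h' \<noteq> h \<longrightarrow> (\<forall>j. v h' j = 0)"
    unfolding v_def by simp
  have f_eq: "f t = ?P (\<lambda>h' j'. \<theta> h' j' + t * v h' j')" if "0 \<le> t" for t
    unfolding f_def pen0_def bn_v[symmetric]
    by (simp only: penalized_add_scaled_zero_block[where \<theta>=\<theta> and v=v, OF h zero supp that])
  have "(\<Sum>h'\<in>?NS. \<Sum>j'<dimU Is h'. v h' j' * score K Is B n \<theta> h' j') = S\<^sup>2"
    using h finite_nonempty_subsets
    by (simp add: sum.remove[of ?NS h] v_def S_def s_def sum_nonneg power2_eq_square)
  then have dl: "((\<lambda>t. loglik K Is B n (\<lambda>h' j'. \<theta> h' j' + t * v h' j')) has_real_derivative S\<^sup>2) (at 0)"
    using loglik_has_real_derivative[OF ne, of B n \<theta> v] by simp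
  have "(f has_real_derivative S\<^sup>2 / ?N - 0 - lam * (lamh h * (1 * S))) (at 0)"
    unfolding f_def by (intro DERIV_diff DERIV_cdivide dl DERIV_const DERIV_cmult DERIV_cmult_right DERIV_ident)
  moreover have "S\<^sup>2 / ?N - 0 - lam * (lamh h * (1 * S)) = S * (S / ?N - lam * lamh h)"
    by (simp add: power2_eq_square algebra_simps)
  moreover have "0 < S * (S / ?N - lam * lamh h)"
    using S gt by simp
  ultimately obtain d where d: "0 < d" "\<forall>t>0. t < d \<longrightarrow> f 0 < f (0 + t)"
    using DERIV_pos_inc_right by metis
  then have "f 0 < f (d / 2)"
    by simp
  moreover have "f 0 = ?P \<theta>"
    using f_eq[of 0] by simp
  moreover have "f (d / 2) = ?P (\<lambda>h' j'. \<theta> h' j' + d / 2 * v h' j')"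
    using d(1) by (intro f_eq) simp
  moreover have "?P (\<lambda>h' j'. \<theta> h' j' + d / 2 * v h' j') \<le> ?P \<theta>"
    using max params_add[OF \<theta> \<open>v \<in> params K Is\<close>] by blast
  ultimately show False
    by linarith
qed

theorem lemma1:
  fixes K :: nat and Is :: "nat \<Rightarrow> nat"
    and B :: "nat set \<Rightarrow> nat \<Rightarrow> cell \<Rightarrow> real"
    and n :: "cell \<Rightarrow> nat" and lam :: real and lamh :: "nat set \<Rightarrow> real"
  assumes K: "K \<ge> 1"
    and Is: "\<forall>k<K. Is k \<ge> 2"
    and basis: "\<forall>h\<in>nonempty_subsets K.
                  is_basis_cols (cells K Is) (B h) (dimU Is h) (U_space (cells K Is) h)"
    and N: "total K Is n \<ge> 1"
    and lam: "lam > 0"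
    and lamh: "\<forall>h\<in>nonempty_subsets K. lamh h > 0"
  shows "\<exists>\<theta>\<in>params K Is.
     (\<forall>\<theta>'\<in>params K Is. penalized K Is B n lam lamh \<theta>' \<le> penalized K Is B n lam lamh \<theta>)
   \<and> (\<forall>\<theta>'\<in>params K Is.
        (\<forall>\<theta>''\<in>params K Is. penalized K Is B n lam lamh \<theta>'' \<le> penalized K Is B n lam lamh \<theta>')
        \<longrightarrow> \<theta>' = \<theta>)
   \<and> (\<forall>h\<in>nonempty_subsets K.
        ((\<exists>j<dimU Is h. \<theta> h j \<noteq> 0) \<longrightarrow>
           (\<forall>j<dimU Is h. - score K Is B n \<theta> h j / real (total K Is n)
                + lam * lamh h * \<theta> h j / block_norm Is \<theta> h = 0))
      \<and> ((\<forall>j<dimU Is h. \<theta> h j = 0) \<longrightarrow>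
           sqrt (\<Sum>j<dimU Is h. (score K Is B n \<theta> h j)\<^sup>2) / real (total K Is n)
             \<le> lam * lamh h))"
proof -
  have ne: "cells K Is \<noteq> {}"
    using Is by (intro cells_nonempty) auto
  have lam0: "0 \<le> lam" and lamh0: "\<forall>h\<in>nonempty_subsets K. 0 \<le> lamh h"
    using lam lamh by auto
  obtain \<theta> where \<theta>: "\<theta> \<in> params K Is"
    and max: "\<forall>\<theta>'\<in>params K Is. penalized K Is B n lam lamh \<theta>' \<le> penalized K Is B n lam lamh \<theta>"
    using penalized_has_maximizer[OF ne N lam lamh] by blast
  have "0 < block_norm Is \<theta> h" if "\<exists>j<dimU Is h. \<theta> h j \<noteq> 0" for h
    using that block_norm_eq_0_iff block_norm_nonneg by (metis order_less_le)
  then show ?thesis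
    using \<theta> max penalized_maximizer_unique[OF basis N lam0 lamh0 _ \<theta> _ max]
      penalized_maximizer_stationary[OF ne \<theta> max] penalized_maximizer_score_le[OF ne N lam0 _ \<theta> max] lamh0
    by blast
qed

end
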